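(* Let $m\ge2$ and let $p\in S_m$ be indecomposable and avoid the pattern $321$. Let $\lambda$ be the number of left-to-right maxima of $p$ (i.e. the number of indices $j$ such that $p_i<p_j$ for all $i<j$). Let $n\ge2$ and let $\omega\in\widetilde{S}_n$ avoid $p$. Then $\left\lfloor |\omega_\beta-\omega_\alpha|/n\right\rfloor\le m^{\lambda+1}+1$ for all $1\le\alpha<\beta\le n$, and consequently $\ell(\omega)\le\left(m^{\lambda+1}+2\right)\binom{n}{2}$.
   Context: For $n\ge 2$, the affine symmetric group $\widetilde{S}_n$ is the set of bijections $\omega:\mathbb{Z}\to\mathbb{Z}$ such that $\omega(i+n)=\omega(i)+n$ for all $i\in\mathbb{Z}$ and $\sum_{i=1}^n\omega(i)=\binom{n+1}{2}$; write $\omega_i=\omega(i)$. The length $\ell(\omega)$ is the number of pairs $(i,j)$ of integers with $1\le i\le n$, $i<j$, and $\omega_i>\omega_j$. For $p\in S_k$, $\omega$ contains $p$ if there exist integers $i_1<\cdots<i_k$ such that $\omega_{i_1}\cdots\omega_{i_k}$ has the same relative order as $p_1\cdots p_k$; otherwise $\omega$ avoids $p$. A permutation $p\in S_m$ is decomposable if there exists $1\le j\le m-1$ with $\{p_1,\dots,p_j\}=\{1,\dots,j\}$, and indecomposable otherwise. *)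

theory Defs
  imports "HOL-Combinatorics.Permutations"
begin

definition affine_perm :: "nat \<Rightarrow> (int \<Rightarrow> int) \<Rightarrow> bool" where
  "affine_perm n w \<longleftrightarrow> bij w \<and> (\<forall>i. w (i + int n) = w i + int n)
     \<and> (\<Sum>i\<in>{1..int n}. w i) = int ((n + 1) choose 2)"

definition affine_length :: "nat \<Rightarrow> (int \<Rightarrow> int) \<Rightarrow> nat" where
  "affine_length n w = card {(i, j). 1 \<le> i \<and> i \<le> int n \<and> i < j \<and> w i > w j}"

definition affine_contains :: "(int \<Rightarrow> int) \<Rightarrow> nat \<Rightarrow> (nat \<Rightarrow> nat) \<Rightarrow> bool" where
  "affine_contains w k q \<longleftrightarrow> (\<exists>idx :: nat \<Rightarrow> int. strict_mono_on {1..k} idx \<and>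
     (\<forall>a\<in>{1..k}. \<forall>b\<in>{1..k}. (w (idx a) < w (idx b) \<longleftrightarrow> q a < q b)))"

definition perm_contains :: "nat \<Rightarrow> (nat \<Rightarrow> nat) \<Rightarrow> nat \<Rightarrow> (nat \<Rightarrow> nat) \<Rightarrow> bool" where
  "perm_contains m p k q \<longleftrightarrow> (\<exists>idx :: nat \<Rightarrow> nat. strict_mono_on {1..k} idx \<and>
     idx ` {1..k} \<subseteq> {1..m} \<and>
     (\<forall>a\<in>{1..k}. \<forall>b\<in>{1..k}. (p (idx a) < p (idx b) \<longleftrightarrow> q a < q b)))"

definition pat321 :: "nat \<Rightarrow> nat" where
  "pat321 i = 4 - i"

definition indecomposable :: "nat \<Rightarrow> (nat \<Rightarrow> nat) \<Rightarrow> bool" where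
  "indecomposable m p \<longleftrightarrow> \<not> (\<exists>j. 1 \<le> j \<and> j \<le> m - 1 \<and> p ` {1..j} = {1..j})"

definition num_ltr_maxima :: "nat \<Rightarrow> (nat \<Rightarrow> nat) \<Rightarrow> nat" where
  "num_ltr_maxima m p = card {j \<in> {1..m}. \<forall>i. 1 \<le> i \<and> i < j \<longrightarrow> p i < p j}"

end

theory Submission
  imports Defs
begin

text \<open>If two window positions alpha < beta had values more
  than m^(lambda+1) + 1 periods apart, the translates of alpha and beta would form
  two increasing chains in w whose mutual order is governed by a single threshold K
  (the rounded-up period difference).  Since p is 321-avoiding, both its
  left-to-right maxima and its other entries appear in increasing order, so an
  occurrence of p only needs suitable periods X 1 < ... < X m for its entries, the
  maxima taken from one chain and the rest from the other; such periods are
  constructed explicitly whenever K is at least m * 2^(lambda-1).  This contradicts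
  avoidance and gives the window bound.  The length bound follows by coding each
  inversion by a pair of window positions and a period number.\<close>

definition ltr_max :: "(nat \<Rightarrow> nat) \<Rightarrow> nat \<Rightarrow> bool" where
  "ltr_max p j \<longleftrightarrow> (\<forall>i. 1 \<le> i \<and> i < j \<longrightarrow> p i < p j)"

definition ltr_rank :: "(nat \<Rightarrow> nat) \<Rightarrow> nat \<Rightarrow> nat" where
  "ltr_rank p N = card {j \<in> {1..N}. ltr_max p j}"

lemma num_ltr_maxima_eq_ltr_rank: "num_ltr_maxima m p = ltr_rank p m"
  unfolding num_ltr_maxima_def ltr_rank_def ltr_max_def by simp

lemma ltr_rank_Suc:
  "ltr_rank p (Suc N) = (if ltr_max p (Suc N) then Suc (ltr_rank p N) else ltr_rank p N)"
proof -
  have "{j \<in> {1..Suc N}. ltr_max p j} =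
        (if ltr_max p (Suc N) then insert (Suc N) else id) {j \<in> {1..N}. ltr_max p j}"
    by (auto simp: le_Suc_eq)
  then show ?thesis unfolding ltr_rank_def by simp
qed

lemma ltr_rank_mono: "N \<le> M \<Longrightarrow> ltr_rank p N \<le> ltr_rank p M"
  unfolding ltr_rank_def by (intro card_mono) auto

lemma ltr_max_index_less:
  assumes "ltr_max p i'" "p i' < p i" "1 \<le> i"
  shows "i' < i"
  using assms unfolding ltr_max_def by (metis less_asym linorder_neqE_nat)

text \<open>In a 321-avoiding permutation the remaining entries are increasing as well:
  an inversion between two of them, together with the larger earlier entry that
  stops the first from being a maximum, would form a 321.\<close>
lemma non_ltr_max_increasing:
  assumes "inj p" "\<not> perm_contains m p 3 pat321"
    and "\<not> ltr_max p l" "\<not> ltr_max p l'" "l < l'" "l' \<le> m"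
  shows "p l < p l'"
proof (rule ccontr)
  assume "\<not> p l < p l'"
  with \<open>inj p\<close> \<open>l < l'\<close> have l'l: "p l' < p l"
    by (metis injD linorder_neqE_nat less_irrefl)
  obtain i where i: "1 \<le> i" "i < l" "p l < p i"
    using \<open>\<not> ltr_max p l\<close> \<open>inj p\<close> unfolding ltr_max_def
    by (metis injD linorder_neqE_nat less_irrefl)
  define idx :: "nat \<Rightarrow> nat" where "idx k = (if k = 1 then i else if k = 2 then l else l')" for k
  have three: "{1..3::nat} = {1, 2, 3}" by auto
  have "perm_contains m p 3 pat321"
    unfolding perm_contains_def
  proof (intro exI[of _ idx] conjI)
    show "strict_mono_on {1..3} idx"
      unfolding strict_mono_on_def idx_def using i \<open>l < l'\<close> by auto
    show "idx ` {1..3} \<subseteq> {1..m}"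
      unfolding idx_def using i \<open>l < l'\<close> \<open>l' \<le> m\<close> by auto
    show "\<forall>a\<in>{1..3}. \<forall>b\<in>{1..3}. (p (idx a) < p (idx b)) = (pat321 a < pat321 b)"
      unfolding three using i l'l by (auto simp: idx_def pat321_def)
  qed
  with assms(2) show False by simp
qed

lemma same_kind_order:
  assumes "inj p" "\<not> perm_contains m p 3 pat321"
    and "a \<in> {1..m}" "b \<in> {1..m}" "ltr_max p a \<longleftrightarrow> ltr_max p b"
  shows "p a < p b \<longleftrightarrow> a < b"
proof (cases "ltr_max p a")
  case True
  with assms show ?thesis
    using ltr_max_index_less[of p a b] unfolding ltr_max_def by auto
next
  case False
  with assms show ?thesis
    using non_ltr_max_increasing[OF assms(1,2), of a b] non_ltr_max_increasing[OF assms(1,2), of b a]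
    by (metis atLeastAtMost_iff less_asym linorder_neqE_nat)
qed

text \<open>Given a threshold K, we choose integers X 1 < ... < X m ("place")
  such that for every left-to-right maximum i and every later non-maximum j,
  X j - X i < K holds exactly when p j < p i.  The gaps halve with the rank, so the gap before a maximum
  exceeds everything placed after it up to the end; this is what keeps later
  non-maxima within distance K of the larger maxima.\<close>
context
  fixes p :: "nat \<Rightarrow> nat" and m :: nat and K :: int
begin

definition gap :: "nat \<Rightarrow> int" where
  "gap r = int m * 2 ^ (ltr_rank p m - r)"

lemma gap_antimono: "r \<le> r' \<Longrightarrow> gap r' \<le> gap r"
  unfolding gap_def by (intro mult_left_mono power_increasing) auto

lemma gap_halves:
  assumes "Suc r \<le> ltr_rank p m"
  shows "gap r = 2 * gap (Suc r)"
proof -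
  have "ltr_rank p m - r = Suc (ltr_rank p m - Suc r)" using assms by simp
  then show ?thesis unfolding gap_def by simp
qed

lemma gap_ge: "int m \<le> gap r"
  unfolding gap_def using mult_left_mono[of 1 "2 ^ (ltr_rank p m - r)" "int m"] by simp

fun place :: "nat \<Rightarrow> int" where
  "place 0 = 0"
| "place (Suc N) =
     (if ltr_max p (Suc N) then place N + gap (ltr_rank p (Suc N))
      else Max (insert (place N + 1)
             ((\<lambda>i. place i + K) ` {i. 1 \<le> i \<and> i \<le> N \<and> ltr_max p i \<and> p i < p (Suc N)})))"

lemma place_Suc_gt:
  assumes "Suc N \<le> m"
  shows "place N < place (Suc N)"
proof (cases "ltr_max p (Suc N)")
  case True
  then show ?thesis using assms gap_ge[of "ltr_rank p (Suc N)"] by simp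
next
  case False
  then have "place N + 1 \<le> place (Suc N)" by simp
  then show ?thesis by simp
qed

lemma place_strict_mono: "i < j \<Longrightarrow> j \<le> m \<Longrightarrow> place i < place j"
proof (induction j)
  case (Suc j)
  then show ?case using place_Suc_gt[of j] by (cases "i = j") auto
qed simp

lemma place_mono: "i \<le> j \<Longrightarrow> j \<le> m \<Longrightarrow> place i \<le> place j"
  using place_strict_mono by (cases "i = j") (auto intro: less_imp_le)

lemma place_less_iff: "i \<le> m \<Longrightarrow> j \<le> m \<Longrightarrow> place i < place j \<longleftrightarrow> i < j"
  using place_strict_mono by (metis less_asym linorder_neqE_nat)

lemma place_lower_ge:
  assumes "1 \<le> i" "i \<le> N" "ltr_max p i" "\<not> ltr_max p (Suc N)" "p i < p (Suc N)"
  shows "place i + K \<le> place (Suc N)"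
  using assms by (auto intro!: Max_ge)

lemma place_lower_cases:
  assumes "\<not> ltr_max p (Suc N)"
  obtains (step) "place (Suc N) = place N + 1"
  | (jump) i where "1 \<le> i" "i \<le> N" "ltr_max p i" "p i < p (Suc N)" "place (Suc N) = place i + K"
proof -
  let ?S = "insert (place N + 1)
             ((\<lambda>i. place i + K) ` {i. 1 \<le> i \<and> i \<le> N \<and> ltr_max p i \<and> p i < p (Suc N)})"
  have "Max ?S \<in> ?S" by (intro Max_in) auto
  with assms that show ?thesis by auto
qed

text \<open>Any position before a maximum i, advanced by the gap of a rank at least that
  of i, is still no further than i itself, because i was placed a full gap beyond its
  predecessor.\<close>
lemma place_before_max:
  assumes "i' < i" "i \<le> M" "M \<le> m" "ltr_max p i"
  shows "place i' + gap (ltr_rank p M) \<le> place i"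
proof -
  have "place i' \<le> place (i - 1)" using assms by (intro place_mono) auto
  moreover have "place (i - 1) + gap (ltr_rank p i) = place i"
    using assms by (cases i) auto
  moreover have "gap (ltr_rank p M) \<le> gap (ltr_rank p i)"
    using assms by (intro gap_antimono ltr_rank_mono)
  ultimately show ?thesis by simp
qed

text \<open>Maxima consume their gap from the halving budget, steps of
  non-maxima consume one unit of the slack N, and a jump beyond a smaller maximum
  i' < i stays below X i + K because the gap in front of i outweighs the budget.\<close>
lemma place_slack:
  assumes K: "gap 1 \<le> K" and N: "N \<le> m"
    and i: "1 \<le> i" "i \<le> N" "ltr_max p i"
    and dominated: "\<forall>l. i < l \<and> l \<le> N \<and> \<not> ltr_max p l \<longrightarrow> p l < p i"
  shows "place N + gap (ltr_rank p N) < place i + K + int N"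
  using N i(2) dominated
proof (induction N)
  case 0
  with i show ?case by simp
next
  case (Suc N)
  consider (new) "i = Suc N" | (old) "i \<le> N" using Suc.prems(2) by linarith
  then show ?case
  proof cases
    case new
    with i have "ltr_rank p (Suc N) = Suc (ltr_rank p N)" by (simp add: ltr_rank_Suc)
    then have "gap (ltr_rank p (Suc N)) \<le> gap 1" by (simp add: gap_antimono)
    with new K show ?thesis by simp
  next
    case old
    have IH: "place N + gap (ltr_rank p N) < place i + K + int N"
      using Suc old by simp
    show ?thesis
    proof (cases "ltr_max p (Suc N)")
      case True
      then have "Suc (ltr_rank p N) \<le> ltr_rank p m"
        using ltr_rank_mono[OF Suc.prems(1), of p] by (simp add: ltr_rank_Suc)
      then have "gap (ltr_rank p N) = 2 * gap (ltr_rank p (Suc N))"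
        using True by (simp add: ltr_rank_Suc gap_halves)
      with True IH show ?thesis by simp
    next
      case lower: False
      then have rank: "ltr_rank p (Suc N) = ltr_rank p N" by (simp add: ltr_rank_Suc)
      have below: "p (Suc N) < p i" using Suc.prems(3) old lower by simp
      from lower show ?thesis
      proof (cases rule: place_lower_cases)
        case step
        with IH rank show ?thesis by simp
      next
        case (jump i')
        have "i' < i" using ltr_max_index_less[OF jump(3)] jump(4) below i(1) by simp
        then have "place i' + gap (ltr_rank p (Suc N)) \<le> place i"
          using Suc.prems(1,2) i(3) by (intro place_before_max) auto
        with jump(5) show ?thesis by simp
      qed
    qed
  qed
qed

lemma place_separates:
  assumes "inj p" "\<not> perm_contains m p 3 pat321" and K: "gap 1 \<le> K"
    and "1 \<le> i" "i < j" "j \<le> m" "ltr_max p i" "\<not> ltr_max p j"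
  shows "place j - place i < K \<longleftrightarrow> p j < p i"
proof
  assume "p j < p i"
  with assms have "\<forall>l. i < l \<and> l \<le> j \<and> \<not> ltr_max p l \<longrightarrow> p l < p i"
    using non_ltr_max_increasing[OF assms(1,2), of _ j] by (metis le_less less_trans)
  then have "place j + gap (ltr_rank p j) < place i + K + int j"
    using assms by (intro place_slack) auto
  moreover have "int j \<le> gap (ltr_rank p j)" using gap_ge[of "ltr_rank p j"] assms by simp
  ultimately show "place j - place i < K" by simp
next
  assume close: "place j - place i < K"
  show "p j < p i"
  proof (rule ccontr)
    assume "\<not> p j < p i"
    with assms have "p i < p j" by (metis injD linorder_neqE_nat)
    then have "place i + K \<le> place (Suc (j - 1))"
      using assms by (intro place_lower_ge) auto
    with close assms show False by simp
  qed
qed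

end


lemma le_div_iff_mult_le_int: "0 < (n::int) \<Longrightarrow> k \<le> D div n \<longleftrightarrow> k * n \<le> D"
  by (smt (verit) minus_div_mult_eq_mod nonzero_mult_div_cancel_right pos_mod_sign zdiv_mono1)

lemma less_ceiling_div_iff: "0 < (n::int) \<Longrightarrow> d * n < D \<longleftrightarrow> d < (D + n - 1) div n"
  using le_div_iff_mult_le_int[of n "d + 1" "D + n - 1"] by (simp add: algebra_simps) linarith

lemma affine_shift:
  assumes "\<forall>i. w (i + int n) = w i + int n"
  shows "w (c + k * int n) = w c + k * int n"
proof (induction k rule: int_induct[where k = 0])
  case (step1 i)
  then show ?case using assms[rule_format, of "c + i * int n"] by (simp add: algebra_simps)
next
  case (step2 i)
  then show ?case using assms[rule_format, of "c + (i - 1) * int n"] by (simp add: algebra_simps)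
qed simp

text \<open>Let x and y lie within distance n of each other and let
  K be the number of periods by which w x exceeds w y, rounded up.  The translates
  x + k n and y + k n form two increasing chains in w, and w (y + k' n) < w (x + k n)
  holds exactly when k' - k < K.  Putting the maxima of p on the x-chain and the
  other entries on the y-chain, at the periods given by the placement, yields an
  occurrence of p as soon as K is at least gap 1.\<close>
lemma realise_pattern:
  fixes w :: "int \<Rightarrow> int" and x y :: int
  assumes p: "inj p" "\<not> perm_contains m p 3 pat321" "1 \<le> m"
    and shift: "\<forall>i. w (i + int n) = w i + int n" and "inj w"
    and "x \<noteq> y" "\<bar>x - y\<bar> < int n"
    and K: "gap p m 1 \<le> (w x - w y + int n - 1) div int n"
  shows "affine_contains w m p"
proof -
  define K where "K = (w x - w y + int n - 1) div int n"
  define X where "X = place p m K"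
  define base where "base j = (if ltr_max p j then x else y)" for j
  define idx where "idx j = base j + X j * int n" for j
  have n: "0 < int n" using \<open>\<bar>x - y\<bar> < int n\<close> by linarith
  have "0 < K" using K gap_ge[of m p 1] p(3) unfolding K_def by linarith
  have w_idx: "w (idx j) = w (base j) + X j * int n" for j
    unfolding idx_def using affine_shift[OF shift] .
  have X_less: "X a < X b \<longleftrightarrow> a < b" if "a \<in> {1..m}" "b \<in> {1..m}" for a b
    using that place_less_iff unfolding X_def by simp
  have idx_less: "idx a < idx b" if "a \<in> {1..m}" "b \<in> {1..m}" "a < b" for a b
  proof -
    have "X a < X b" using that X_less by blast
    then have "(X a + 1) * int n \<le> X b * int n"
      using n by (intro mult_right_mono) auto
    then show ?thesis
      unfolding idx_def base_def using \<open>\<bar>x - y\<bar> < int n\<close> by (simp add: algebra_simps) linarith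
  qed
  have cross: "w (idx b) < w (idx a) \<longleftrightarrow> p b < p a"
    if ab: "a \<in> {1..m}" "b \<in> {1..m}" "ltr_max p a" "\<not> ltr_max p b" for a b
  proof -
    have "w (idx b) < w (idx a) \<longleftrightarrow> (X b - X a) * int n < w x - w y"
      unfolding w_idx base_def using ab by (simp add: algebra_simps)
    also have "\<dots> \<longleftrightarrow> X b - X a < K"
      unfolding K_def using less_ceiling_div_iff[OF n] by simp
    also have "\<dots> \<longleftrightarrow> p b < p a"
    proof (cases "a < b")
      case True
      then show ?thesis
        using place_separates[OF p(1,2)] K ab unfolding X_def K_def by auto
    next
      case False
      then have "b < a" using ab by (metis linorder_neqE_nat)
      then have "X b < X a" "p b < p a" using X_less ab unfolding ltr_max_def by auto
      then show ?thesis using \<open>0 < K\<close> by simp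
    qed
    finally show ?thesis .
  qed
  show ?thesis
    unfolding affine_contains_def
  proof (intro exI[of _ idx] conjI ballI)
    show "strict_mono_on {1..m} idx"
      using idx_less by (auto simp: strict_mono_on_def)
  next
    fix a b assume ab: "a \<in> {1..m}" "b \<in> {1..m}"
    show "w (idx a) < w (idx b) \<longleftrightarrow> p a < p b"
    proof (cases "ltr_max p a \<longleftrightarrow> ltr_max p b")
      case True
      then have "w (idx a) < w (idx b) \<longleftrightarrow> X a < X b"
        unfolding w_idx base_def using n by (auto simp: mult_less_cancel_right)
      with True ab show ?thesis
        using X_less same_kind_order[OF p(1,2)] by simp
    next
      case False
      then have "a \<noteq> b" by auto
      then have "w (idx a) \<noteq> w (idx b)"
        using idx_less ab \<open>inj w\<close> by (metis injD linorder_neqE_nat less_irrefl)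
      moreover have "p a \<noteq> p b" using \<open>a \<noteq> b\<close> \<open>inj p\<close> by (metis injD)
      ultimately show ?thesis
        using False cross[of a b] cross[of b a] ab by (cases "ltr_max p a") auto
    qed
  qed
qed

lemma gap_le_power:
  assumes "2 \<le> m"
  shows "gap p m 1 \<le> int (m ^ (ltr_rank p m + 1))"
proof -
  let ?a = "ltr_rank p m"
  have "m * 2 ^ (?a - 1) \<le> m * m ^ (?a - 1)"
    using assms by (intro mult_left_mono power_mono) auto
  also have "\<dots> \<le> m * m ^ ?a"
    using assms by (intro mult_left_mono power_increasing) auto
  also have "\<dots> = m ^ (?a + 1)" by simp
  finally have "int (m * 2 ^ (?a - 1)) \<le> int (m ^ (?a + 1))" by (simp only: of_nat_le_iff)
  then show ?thesis unfolding gap_def by simp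
qed

text \<open>A value difference of more than m^(lambda+1) + 1
  periods between two positions of the window 1..n gives two positions x, y within
  distance n whose rounded-up period difference exceeds m^(lambda+1): (alpha, beta)
  if w beta < w alpha, and (beta, alpha + n) otherwise.\<close>
lemma window_bound:
  assumes p: "2 \<le> m" "p permutes {1..m}" "\<not> perm_contains m p 3 pat321"
    and w: "affine_perm n w" "\<not> affine_contains w m p"
    and \<alpha>\<beta>: "1 \<le> \<alpha>" "\<alpha> < \<beta>" "\<beta> \<le> int n"
  shows "\<bar>w \<beta> - w \<alpha>\<bar> div int n \<le> int (m ^ (ltr_rank p m + 1) + 1)"
proof (rule ccontr)
  define B where "B = int (m ^ (ltr_rank p m + 1))"
  have n: "0 < int n" using \<alpha>\<beta> by linarith
  have shift: "\<forall>i. w (i + int n) = w i + int n" and "inj w"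
    using w(1) bij_is_inj unfolding affine_perm_def by auto
  assume "\<not> ?thesis"
  then have far: "(B + 2) * int n \<le> \<bar>w \<beta> - w \<alpha>\<bar>"
    using le_div_iff_mult_le_int[OF n] unfolding B_def by fastforce
  obtain x y where xy: "x \<noteq> y" "\<bar>x - y\<bar> < int n" "(B + 1) * int n \<le> w x - w y + int n - 1"
  proof (cases "w \<beta> < w \<alpha>")
    case True
    with far \<alpha>\<beta> show ?thesis by (intro that[of \<alpha> \<beta>]) (auto simp: algebra_simps)
  next
    case False
    have "w (\<alpha> + int n) = w \<alpha> + int n" using shift by blast
    with False far \<alpha>\<beta> show ?thesis by (intro that[of \<beta> "\<alpha> + int n"]) (auto simp: algebra_simps)
  qed
  have "B + 1 \<le> (w x - w y + int n - 1) div int n"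
    using xy(3) le_div_iff_mult_le_int[OF n] by blast
  then have "gap p m 1 \<le> (w x - w y + int n - 1) div int n"
    using gap_le_power[OF p(1), of p] unfolding B_def by linarith
  then have "affine_contains w m p"
    using realise_pattern[OF permutes_inj[OF p(2)] p(3) _ shift \<open>inj w\<close> xy(1,2)] p(1) by simp
  with w(2) show False ..
qed

definition window_rep :: "nat \<Rightarrow> int \<Rightarrow> int" where
  "window_rep n j = (j - 1) mod int n + 1"

definition window_num :: "nat \<Rightarrow> int \<Rightarrow> int" where
  "window_num n j = (j - 1) div int n"

lemma window_decomp: "j = window_rep n j + window_num n j * int n"
  unfolding window_rep_def window_num_def using div_mult_mod_eq[of "j - 1" "int n"] by simp

lemma window_rep_bounds:
  assumes "0 < n"
  shows "1 \<le> window_rep n j \<and> window_rep n j \<le> int n"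
proof -
  have "0 \<le> (j - 1) mod int n" "(j - 1) mod int n < int n" using assms by simp_all
  then show ?thesis unfolding window_rep_def by linarith
qed

lemma inversion_window:
  assumes shift: "\<forall>i. w (i + int n) = w i + int n" and "0 < n"
    and inv: "1 \<le> i" "i < j" "w j < w i"
  defines "r \<equiv> window_rep n j" and "k \<equiv> window_num n j"
  shows "0 \<le> k" "w r + k * int n < w i" "r \<noteq> i" "r < i \<Longrightarrow> 1 \<le> k"
proof -
  show "0 \<le> k" unfolding k_def window_num_def using inv \<open>0 < n\<close> by (simp add: pos_imp_zdiv_nonneg_iff)
  have "j = r + k * int n" unfolding r_def k_def by (rule window_decomp)
  then have "w j = w r + k * int n" using affine_shift[OF shift] by simp
  with inv show below: "w r + k * int n < w i" by simp
  with \<open>0 \<le> k\<close> show "r \<noteq> i" by (smt (verit) zero_le_mult_iff of_nat_0_le_iff)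
  show "1 \<le> k" if "r < i"
    using \<open>j = r + k * int n\<close> \<open>0 \<le> k\<close> that inv(2) by (cases "k = 0") auto
qed

text \<open>An inversion (i, j) is coded by the 2-set
  {i, window_rep n j} and the number of periods between them (one less when the
  representative precedes i, since then j lies at least one period further on).
  Codes are injective, and the period number is bounded by the window bound.\<close>
definition inversion_code :: "nat \<Rightarrow> int \<times> int \<Rightarrow> int set \<times> int" where
  "inversion_code n ij = (case ij of (i, j) \<Rightarrow>
     ({i, window_rep n j}, if i < window_rep n j then window_num n j else window_num n j - 1))"

lemma inversion_code_range:
  assumes shift: "\<forall>i. w (i + int n) = w i + int n" and "0 < n"
    and bound: "\<forall>\<alpha> \<beta>. 1 \<le> \<alpha> \<and> \<alpha> < \<beta> \<and> \<beta> \<le> int n \<longrightarrow> \<bar>w \<beta> - w \<alpha>\<bar> div int n \<le> int B"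
    and inv: "1 \<le> i" "i \<le> int n" "i < j" "w j < w i"
  shows "inversion_code n (i, j) \<in> {E. E \<subseteq> {1..int n} \<and> card E = 2} \<times> {0..int B}"
proof -
  define r where "r = window_rep n j"
  define k where "k = window_num n j"
  note facts = inversion_window[OF shift \<open>0 < n\<close> inv(1,3,4), folded r_def k_def]
  have n: "0 < int n" using \<open>0 < n\<close> by simp
  have r: "1 \<le> r" "r \<le> int n" using window_rep_bounds[OF \<open>0 < n\<close>] unfolding r_def by auto
  have "k * int n \<le> \<bar>w i - w r\<bar>" using facts(2) by linarith
  then have "k \<le> \<bar>w i - w r\<bar> div int n" using le_div_iff_mult_le_int[OF n] by blast
  moreover have "\<bar>w i - w r\<bar> div int n \<le> int B"
    using bound[rule_format, of i r] bound[rule_format, of r i] inv(1,2) r facts(3)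
    by (cases "i < r") (auto simp: abs_minus_commute)
  ultimately have "k \<le> int B" by simp
  moreover have "inversion_code n (i, j) = ({i, r}, if i < r then k else k - 1)"
    unfolding inversion_code_def r_def k_def by simp
  ultimately show ?thesis using facts inv(1,2) r by auto
qed

text \<open>Distinct inversions have distinct codes: equal 2-sets with swapped roles would
  give two opposite inversions between the same pair of chains, which is impossible.\<close>
lemma inversion_code_inj:
  assumes shift: "\<forall>i. w (i + int n) = w i + int n" and "0 < n"
  shows "inj_on (inversion_code n) {(i, j). 1 \<le> i \<and> i \<le> int n \<and> i < j \<and> w i > w j}"
proof (rule inj_onI)
  fix x y
  assume x: "x \<in> {(i, j). 1 \<le> i \<and> i \<le> int n \<and> i < j \<and> w i > w j}"
    and y: "y \<in> {(i, j). 1 \<le> i \<and> i \<le> int n \<and> i < j \<and> w i > w j}"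
    and code: "inversion_code n x = inversion_code n y"
  obtain i1 j1 i2 j2 where xy: "x = (i1, j1)" "y = (i2, j2)" by fastforce
  have inv1: "1 \<le> i1" "i1 < j1" "w j1 < w i1" and inv2: "1 \<le> i2" "i2 < j2" "w j2 < w i2"
    using x y unfolding xy by auto
  define r1 k1 r2 k2 where "r1 = window_rep n j1" "k1 = window_num n j1"
    "r2 = window_rep n j2" "k2 = window_num n j2"
  note facts1 = inversion_window[OF shift \<open>0 < n\<close> inv1, folded r1_k1_r2_k2_def(1,2)]
  note facts2 = inversion_window[OF shift \<open>0 < n\<close> inv2, folded r1_k1_r2_k2_def(3,4)]
  have pairs: "{i1, r1} = {i2, r2}"
    and nums: "(if i1 < r1 then k1 else k1 - 1) = (if i2 < r2 then k2 else k2 - 1)"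
    using code unfolding xy inversion_code_def r1_k1_r2_k2_def by simp_all
  have same: "i1 = i2 \<and> r1 = r2"
  proof (rule ccontr)
    assume "\<not> ?thesis"
    then have swapped: "i1 = r2" "r1 = i2" using pairs by (auto simp: doubleton_eq_iff)
    have "0 \<le> (k1 + k2) * int n" using facts1(1) facts2(1) by simp
    then show False using facts1(2) facts2(2) swapped by (simp add: algebra_simps)
  qed
  then have "k1 = k2" using nums by (auto split: if_splits)
  with same show "x = y"
    using window_decomp[of j1 n] window_decomp[of j2 n] unfolding xy r1_k1_r2_k2_def by metis
qed

lemma length_bound:
  assumes "affine_perm n w" "0 < n"
    and bound: "\<forall>\<alpha> \<beta>. 1 \<le> \<alpha> \<and> \<alpha> < \<beta> \<and> \<beta> \<le> int n \<longrightarrow> \<bar>w \<beta> - w \<alpha>\<bar> div int n \<le> int B"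
  shows "affine_length n w \<le> (B + 1) * (n choose 2)"
proof -
  define A where "A = {(i, j). 1 \<le> i \<and> i \<le> int n \<and> i < j \<and> w i > w j}"
  define T where "T = {E. E \<subseteq> {1..int n} \<and> card E = 2} \<times> {0..int B}"
  have shift: "\<forall>i. w (i + int n) = w i + int n" using assms(1) unfolding affine_perm_def by blast
  have "inversion_code n ` A \<subseteq> T"
  proof (rule image_subsetI, clarify)
    fix i j assume "(i, j) \<in> A"
    then show "inversion_code n (i, j) \<in> T"
      unfolding T_def A_def by (intro inversion_code_range[OF shift \<open>0 < n\<close> bound]) auto
  qed
  moreover have "inj_on (inversion_code n) A"
    using inversion_code_inj[OF shift \<open>0 < n\<close>] unfolding A_def .
  moreover have "card T = (n choose 2) * (B + 1)"
    unfolding T_def card_cartesian_product by (simp add: n_subsets nat_add_distrib)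
  ultimately have "card A \<le> (n choose 2) * (B + 1)"
    using card_inj_on_le[of "inversion_code n" A T] unfolding T_def by simp
  then show ?thesis unfolding affine_length_def A_def by (simp add: mult.commute)
qed

theorem mainTheorem5:
  fixes m n :: nat and p :: "nat \<Rightarrow> nat" and w :: "int \<Rightarrow> int"
  assumes "m \<ge> 2"
    and "p permutes {1..m}"
    and "indecomposable m p"
    and "\<not> perm_contains m p 3 pat321"
    and "n \<ge> 2"
    and "affine_perm n w"
    and "\<not> affine_contains w m p"
  shows "(\<forall>\<alpha> \<beta>. 1 \<le> \<alpha> \<and> \<alpha> < \<beta> \<and> \<beta> \<le> int n \<longrightarrow>
            \<bar>w \<beta> - w \<alpha>\<bar> div int n \<le> int (m ^ (num_ltr_maxima m p + 1) + 1))
         \<and> affine_length n w \<le> (m ^ (num_ltr_maxima m p + 1) + 2) * (n choose 2)"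
proof -
  have window: "\<forall>\<alpha> \<beta>. 1 \<le> \<alpha> \<and> \<alpha> < \<beta> \<and> \<beta> \<le> int n \<longrightarrow>
      \<bar>w \<beta> - w \<alpha>\<bar> div int n \<le> int (m ^ (num_ltr_maxima m p + 1) + 1)"
    using window_bound[OF assms(1,2,4,6,7)] unfolding num_ltr_maxima_eq_ltr_rank by blast
  moreover have "affine_length n w \<le> (m ^ (num_ltr_maxima m p + 1) + 1 + 1) * (n choose 2)"
    using length_bound[OF assms(6) _ window] assms(5) by simp
  ultimately show ?thesis by simp
qed

end
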